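(* Let $S$ be a finite semigroup such that $\equiv_{\mathsf{RM}}$ is the equality relation. If the action of $S$ on a partial $S$-set $\Omega$ is faithful, then so is the action of $S$ on its semisimplification $\Omega_{ss}$. Moreover, $|\Omega_{ss}|\le|\Omega|$.
   Context: Semigroups act on the right. A regular $\mathscr J$-class is one containing an idempotent. For a regular $\mathscr J$-class $J$: $s\equiv_{\mathsf{RM},J}t$ iff for all $x\in J$, $xs\in J\iff xt\in J$, and if both lie in $J$ then $xs=xt$; $\equiv_{\mathsf{RM}}=\bigcap_J\equiv_{\mathsf{RM},J}$ over regular $J$. A partial $S$-set is a finite set $\Omega$ with a right action by partial maps; faithful means distinct elements act as distinct partial maps. The strong orbit of $\alpha$ is $\mathscr O_\alpha=\{\beta\in\Omega\mid\alpha S^1=\beta S^1\}$; it is null if $\mathscr O_\alpha S\cap\mathscr O_\alpha=\emptyset$ and transitive otherwise. The semisimplification $\Omega_{ss}$ is the set $\{\alpha\in\Omega\mid\alpha\in\alpha S\}$ (the union of transitive strong orbits) with action $\alpha\circ s=\alpha s$ if $\alpha s$ is defined and lies in $\mathscr O_\alpha$, and undefined otherwise. *)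

theory Defs
  imports Main
begin

(* A finite semigroup is modelled as a finite type of class semigroup_mult;
   the semigroup S is UNIV of that type. *)

definition ideal2 :: "'s::semigroup_mult \<Rightarrow> 's set" where
  "ideal2 s = {s} \<union> {x * s | x. True} \<union> {s * y | y. True} \<union> {x * s * y | x y. True}"

definition greenJ :: "'s::semigroup_mult \<Rightarrow> 's \<Rightarrow> bool" where
  "greenJ s t \<longleftrightarrow> ideal2 s = ideal2 t"

definition Jclass :: "'s::semigroup_mult \<Rightarrow> 's set" where
  "Jclass s = {t. greenJ s t}"

definition regular_Jclass :: "'s::semigroup_mult set \<Rightarrow> bool" where
  "regular_Jclass J \<longleftrightarrow> (\<exists>s. J = Jclass s) \<and> (\<exists>e\<in>J. e * e = e)"

definition rm_equiv_J :: "'s::semigroup_mult set \<Rightarrow> 's \<Rightarrow> 's \<Rightarrow> bool" where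
  "rm_equiv_J J s t \<longleftrightarrow>
     (\<forall>x\<in>J. (x * s \<in> J \<longleftrightarrow> x * t \<in> J) \<and> (x * s \<in> J \<and> x * t \<in> J \<longrightarrow> x * s = x * t))"

definition rm_equiv :: "'s::semigroup_mult \<Rightarrow> 's \<Rightarrow> bool" where
  "rm_equiv s t \<longleftrightarrow> (\<forall>J. regular_Jclass J \<longrightarrow> rm_equiv_J J s t)"

(* Partial right action: act \<alpha> s = Some \<beta> means \<alpha>s = \<beta>, None means undefined. *)
definition partial_S_set :: "'o set \<Rightarrow> ('o \<Rightarrow> 's::semigroup_mult \<Rightarrow> 'o option) \<Rightarrow> bool" where
  "partial_S_set \<Omega> act \<longleftrightarrow> finite \<Omega> \<and>
     (\<forall>\<alpha>\<in>\<Omega>. \<forall>s \<beta>. act \<alpha> s = Some \<beta> \<longrightarrow> \<beta> \<in> \<Omega>) \<and>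
     (\<forall>\<alpha>\<in>\<Omega>. \<forall>s t. act \<alpha> (s * t) = (case act \<alpha> s of None \<Rightarrow> None | Some \<beta> \<Rightarrow> act \<beta> t))"

definition faithful :: "'o set \<Rightarrow> ('o \<Rightarrow> 's \<Rightarrow> 'o option) \<Rightarrow> bool" where
  "faithful \<Omega> act \<longleftrightarrow> (\<forall>s t. (\<forall>\<alpha>\<in>\<Omega>. act \<alpha> s = act \<alpha> t) \<longrightarrow> s = t)"

definition orbit1 :: "('o \<Rightarrow> 's \<Rightarrow> 'o option) \<Rightarrow> 'o \<Rightarrow> 'o set" where
  "orbit1 act \<alpha> = {\<alpha>} \<union> {\<beta>. \<exists>s. act \<alpha> s = Some \<beta>}"

definition strong_orbit :: "'o set \<Rightarrow> ('o \<Rightarrow> 's \<Rightarrow> 'o option) \<Rightarrow> 'o \<Rightarrow> 'o set" where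
  "strong_orbit \<Omega> act \<alpha> = {\<beta>\<in>\<Omega>. orbit1 act \<alpha> = orbit1 act \<beta>}"

definition ss_set :: "'o set \<Rightarrow> ('o \<Rightarrow> 's \<Rightarrow> 'o option) \<Rightarrow> 'o set" where
  "ss_set \<Omega> act = {\<alpha>\<in>\<Omega>. \<exists>s. act \<alpha> s = Some \<alpha>}"

definition ss_act :: "'o set \<Rightarrow> ('o \<Rightarrow> 's \<Rightarrow> 'o option) \<Rightarrow> 'o \<Rightarrow> 's \<Rightarrow> 'o option" where
  "ss_act \<Omega> act \<alpha> s = (case act \<alpha> s of None \<Rightarrow> None
      | Some \<beta> \<Rightarrow> if \<beta> \<in> strong_orbit \<Omega> act \<alpha> then Some \<beta> else None)"

end

theory Submission
  imports Defs
begin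

(* Suppose s and t act alike on the semisimplification and x, xs lie in a common J-class J.
   By stability of finite semigroups x = xsu for some u.  For each point alpha with alpha x
   defined, alpha x and alpha xs then lie in one transitive strong orbit (u leads back), where
   s and t act alike; hence alpha xs = alpha xt and alpha xtu = alpha x.  Faithfulness gives
   xs = xt and x = xtu, so xt lies in J as well.  Thus s and t are RM-equivalent on every
   J-class (regular or not), and therefore equal. *)

lemma left_mult_funpow_commute:
  fixes a y c :: "'s::semigroup_mult"
  shows "((\<lambda>z. a * z) ^^ k) (y * c) = ((\<lambda>z. a * z) ^^ k) y * c"
  by (induction k) (simp_all add: mult.assoc)

lemma right_mult_funpow_Suc:
  fixes y c :: "'s::semigroup_mult"
  shows "\<exists>d. ((\<lambda>z. z * c) ^^ Suc n) y = y * d"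
proof (induction n)
  case (Suc n)
  then obtain d where "((\<lambda>z. z * c) ^^ Suc n) y = y * d" ..
  then have "((\<lambda>z. z * c) ^^ Suc (Suc n)) y = y * (d * c)"
    by (simp add: mult.assoc)
  then show ?case ..
qed auto

(* x = a x c gives x = (a^k x) c^k for all k; two equal left translates a^i x = a^j x
   with i < j then give x = x c^(j-i). *)
lemma two_sided_fixpoint_right_periodic:
  fixes x a c :: "'s::{semigroup_mult, finite}"
  assumes "x = a * x * c"
  obtains n where "n > 0" and "((\<lambda>y. y * c) ^^ n) x = x"
proof -
  define L where "L k = ((\<lambda>y. a * y) ^^ k) x" for k
  let ?R = "(\<lambda>y. y * c)"
  have x_eq: "x = (?R ^^ k) (L k)" for k
  proof (induction k)
    case (Suc k)
    have "L k = ((\<lambda>y. a * y) ^^ k) (a * x * c)"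
      unfolding L_def using assms by simp
    also have "\<dots> = L (Suc k) * c"
      by (simp add: L_def left_mult_funpow_commute funpow_swap1)
    finally show ?case
      using Suc by (simp add: funpow_Suc_right del: funpow.simps)
  qed (simp add: L_def)
  have "\<not> inj L"
    by (metis finite finite_imageD infinite_UNIV_nat)
  then obtain i j where "i < j" and "L i = L j"
    unfolding inj_def by (metis linorder_neqE_nat)
  show thesis
  proof
    show "j - i > 0"
      using \<open>i < j\<close> by simp
    have "(?R ^^ (j - i)) x = (?R ^^ (j - i)) ((?R ^^ i) (L j))"
      using x_eq [of i] \<open>L i = L j\<close> by simp
    also have "\<dots> = x"
      using x_eq [of j] \<open>i < j\<close> funpow_add [of "j - i" i ?R] by simp
    finally show "(?R ^^ (j - i)) x = x" .
  qed
qed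

lemma two_sided_fixpoint_right_multiple:
  fixes x a c :: "'s::{semigroup_mult, finite}"
  assumes "x = a * x * c"
  shows "\<exists>d. x = x * c * d"
proof -
  let ?R = "(\<lambda>y. y * c)"
  obtain n where "n > 0" and "(?R ^^ n) x = x"
    using two_sided_fixpoint_right_periodic assms by blast
  have "x = (?R ^^ (n + n)) x"
    using \<open>(?R ^^ n) x = x\<close> by (simp only: funpow_add comp_apply)
  also have "n + n = Suc (Suc (n + n - 2))"
    using \<open>n > 0\<close> by simp
  also have "(?R ^^ Suc (Suc (n + n - 2))) x = (?R ^^ Suc (n + n - 2)) (x * c)"
    by (simp only: funpow_Suc_right comp_apply)
  also obtain d where "(?R ^^ Suc (n + n - 2)) (x * c) = x * c * d"
    using right_mult_funpow_Suc by blast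
  finally show ?thesis ..
qed

lemma mem_ideal2_right_multiple:
  fixes x s :: "'s::{semigroup_mult, finite}"
  assumes "x \<in> ideal2 (x * s)"
  shows "\<exists>u. x = x * s * u"
proof -
  have multiple: "\<exists>d. x = x * c * d" if "x = x * c \<or> (\<exists>a. x = a * x * c)" for c
  proof (cases "x = x * c")
    case True
    then have "x = x * c * c"
      by (metis mult.assoc)
    then show ?thesis ..
  qed (use that two_sided_fixpoint_right_multiple in blast)
  have "(\<exists>a. x = x * s \<or> x = a * x * s) \<or> (\<exists>a b. x = x * (s * b) \<or> x = a * x * (s * b))"
    using assms unfolding ideal2_def by (auto simp: mult.assoc)
  then show ?thesis
  proof
    assume "\<exists>a. x = x * s \<or> x = a * x * s"
    then show ?thesis
      using multiple [of s] by blast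
  next
    assume "\<exists>a b. x = x * (s * b) \<or> x = a * x * (s * b)"
    then obtain b d where "x = x * (s * b) * d"
      using multiple by blast
    then have "x = x * s * (b * d)"
      by (metis mult.assoc)
    then show ?thesis ..
  qed
qed

lemma partial_S_set_mult:
  assumes "partial_S_set \<Omega> act" and "\<alpha> \<in> \<Omega>"
  shows "act \<alpha> (s * t) = (case act \<alpha> s of None \<Rightarrow> None | Some \<beta> \<Rightarrow> act \<beta> t)"
  using assms unfolding partial_S_set_def by blast

lemma partial_S_set_closed:
  assumes "partial_S_set \<Omega> act" and "\<alpha> \<in> \<Omega>" and "act \<alpha> s = Some \<beta>"
  shows "\<beta> \<in> \<Omega>"
  using assms unfolding partial_S_set_def by blast

lemma orbit1_act_subset:
  assumes "partial_S_set \<Omega> act" and "\<alpha> \<in> \<Omega>" and "act \<alpha> s = Some \<beta>"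
  shows "orbit1 act \<beta> \<subseteq> orbit1 act \<alpha>"
proof
  fix \<gamma> assume "\<gamma> \<in> orbit1 act \<beta>"
  then consider "\<gamma> = \<beta>" | t where "act \<beta> t = Some \<gamma>"
    unfolding orbit1_def by blast
  then show "\<gamma> \<in> orbit1 act \<alpha>"
  proof cases
    case (2 t)
    then have "act \<alpha> (s * t) = Some \<gamma>"
      using partial_S_set_mult [OF assms(1,2)] assms(3) by simp
    then show ?thesis
      unfolding orbit1_def by blast
  qed (use assms(3) in \<open>auto simp: orbit1_def\<close>)
qed

lemma in_strong_orbitI:
  assumes "partial_S_set \<Omega> act" and "\<alpha> \<in> \<Omega>"
    and "act \<alpha> s = Some \<beta>" and "act \<beta> u = Some \<alpha>"
  shows "\<beta> \<in> strong_orbit \<Omega> act \<alpha>"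
proof -
  have "\<beta> \<in> \<Omega>"
    using partial_S_set_closed assms(1-3) .
  then have "orbit1 act \<alpha> = orbit1 act \<beta>"
    using orbit1_act_subset assms by (metis subset_antisym)
  then show ?thesis
    using \<open>\<beta> \<in> \<Omega>\<close> unfolding strong_orbit_def by blast
qed

lemma ss_act_Some_imp_act:
  "ss_act \<Omega> act \<alpha> s = Some \<beta> \<Longrightarrow> act \<alpha> s = Some \<beta>"
  unfolding ss_act_def by (auto split: option.splits if_splits)

lemma ss_act_cycle:
  assumes "partial_S_set \<Omega> act" and "\<alpha> \<in> \<Omega>"
    and "act \<alpha> s = Some \<beta>" and "act \<beta> u = Some \<alpha>"
  shows "\<alpha> \<in> ss_set \<Omega> act" and "ss_act \<Omega> act \<alpha> s = Some \<beta>"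
proof -
  have "act \<alpha> (s * u) = Some \<alpha>"
    using partial_S_set_mult [OF assms(1,2)] assms(3,4) by simp
  then show "\<alpha> \<in> ss_set \<Omega> act"
    using assms(2) unfolding ss_set_def by blast
  show "ss_act \<Omega> act \<alpha> s = Some \<beta>"
    using in_strong_orbitI [OF assms] assms(3) unfolding ss_act_def by simp
qed

(* Since x = xsu, every defined point alpha x lies on the cycle alpha x -s-> alpha xs -u-> alpha x
   inside one strong orbit, where s and t act alike. *)
lemma ss_act_eq_right_multiple:
  assumes P: "partial_S_set \<Omega> act" and F: "faithful \<Omega> act"
    and st: "\<forall>\<alpha>\<in>ss_set \<Omega> act. ss_act \<Omega> act \<alpha> s = ss_act \<Omega> act \<alpha> t"
    and x: "x = x * s * u"
  shows "x * s = x * t" and "x = x * t * u"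
proof -
  have "act \<alpha> (x * s) = act \<alpha> (x * t) \<and> act \<alpha> x = act \<alpha> (x * t * u)" if "\<alpha> \<in> \<Omega>" for \<alpha>
  proof (cases "act \<alpha> x")
    case None
    then show ?thesis
      using partial_S_set_mult [OF P that] by simp
  next
    case (Some \<delta>)
    have "\<delta> \<in> \<Omega>"
      using partial_S_set_closed [OF P that Some] .
    have "act \<alpha> x = act \<alpha> (x * (s * u))"
      using arg_cong [OF x, of "act \<alpha>"] by (simp only: mult.assoc)
    then have "act \<delta> (s * u) = Some \<delta>"
      using partial_S_set_mult [OF P that] Some by simp
    then obtain \<gamma> where \<gamma>: "act \<delta> s = Some \<gamma>" and "act \<gamma> u = Some \<delta>"
      using partial_S_set_mult [OF P \<open>\<delta> \<in> \<Omega>\<close>] by (auto split: option.splits)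
    then have "act \<delta> t = Some \<gamma>"
      using ss_act_cycle [OF P \<open>\<delta> \<in> \<Omega>\<close>] st ss_act_Some_imp_act by metis
    then show ?thesis
      using partial_S_set_mult [OF P that] Some \<gamma> \<open>act \<gamma> u = Some \<delta>\<close> by simp
  qed
  then show "x * s = x * t" and "x = x * t * u"
    using F unfolding faithful_def by blast+
qed

lemma ideal2_self: "x \<in> ideal2 x"
  unfolding ideal2_def by blast

lemma ideal2_subset_of_mem:
  assumes "y \<in> ideal2 z"
  shows "ideal2 y \<subseteq> ideal2 z"
  using assms unfolding ideal2_def by (auto simp: mult.assoc) (metis mult.assoc)+

lemma ss_act_eq_greenJ:
  fixes act :: "'o \<Rightarrow> 's::{semigroup_mult, finite} \<Rightarrow> 'o option"
  assumes "partial_S_set \<Omega> act" and "faithful \<Omega> act"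
    and "\<forall>\<alpha>\<in>ss_set \<Omega> act. ss_act \<Omega> act \<alpha> s = ss_act \<Omega> act \<alpha> t"
    and "greenJ x (x * s)"
  shows "greenJ x (x * t)" and "x * s = x * t"
proof -
  have "x \<in> ideal2 (x * s)"
    using ideal2_self [of x] assms(4) unfolding greenJ_def by simp
  then obtain u where "x = x * s * u"
    using mem_ideal2_right_multiple by blast
  note ss_act_eq_right_multiple [OF assms(1-3) this]
  then have "x \<in> ideal2 (x * t)" and "x * t \<in> ideal2 x"
    unfolding ideal2_def by blast+
  then show "greenJ x (x * t)"
    unfolding greenJ_def using ideal2_subset_of_mem by blast
  show "x * s = x * t" by fact
qed

lemma ss_act_eq_imp_rm_equiv:
  fixes act :: "'o \<Rightarrow> 's::{semigroup_mult, finite} \<Rightarrow> 'o option"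
  assumes "partial_S_set \<Omega> act" and "faithful \<Omega> act"
    and "\<forall>\<alpha>\<in>ss_set \<Omega> act. ss_act \<Omega> act \<alpha> s = ss_act \<Omega> act \<alpha> t"
  shows "rm_equiv s t"
proof -
  have right_mult_Jclass: "x * t' \<in> Jclass j \<and> x * s' = x * t'"
    if "\<forall>\<alpha>\<in>ss_set \<Omega> act. ss_act \<Omega> act \<alpha> s' = ss_act \<Omega> act \<alpha> t'"
      and "x \<in> Jclass j" and "x * s' \<in> Jclass j" for j x s' t'
  proof -
    have "greenJ x (x * s')"
      using that(2,3) unfolding Jclass_def greenJ_def by simp
    then show ?thesis
      using ss_act_eq_greenJ [OF assms(1,2) that(1)] that(2)
      unfolding Jclass_def greenJ_def by simp
  qed
  have "rm_equiv_J (Jclass j) s t" for j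
    unfolding rm_equiv_J_def
    using right_mult_Jclass [OF assms(3)] right_mult_Jclass [of t s] assms(3) by metis
  then show ?thesis
    unfolding rm_equiv_def regular_Jclass_def by blast
qed

theorem proposition2p2:
  fixes \<Omega> :: "'o set" and act :: "'o \<Rightarrow> 's::{semigroup_mult, finite} \<Rightarrow> 'o option"
  assumes "\<forall>s t::'s. rm_equiv s t \<longrightarrow> s = t"
    and "partial_S_set \<Omega> act"
    and "faithful \<Omega> act"
  shows "faithful (ss_set \<Omega> act) (ss_act \<Omega> act) \<and> card (ss_set \<Omega> act) \<le> card \<Omega>"
proof
  show "faithful (ss_set \<Omega> act) (ss_act \<Omega> act)"
    unfolding faithful_def using ss_act_eq_imp_rm_equiv assms by blast
  have "finite \<Omega>"
    using assms(2) unfolding partial_S_set_def by blast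
  moreover have "ss_set \<Omega> act \<subseteq> \<Omega>"
    unfolding ss_set_def by blast
  ultimately show "card (ss_set \<Omega> act) \<le> card \<Omega>"
    by (rule card_mono)
qed

end
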